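(* Let $S\subseteq 2^E$ be a powerful set with $|E|=n$ and $r_S(E)=n-1$. Then there is at most one element $e\in E$ with $r_S(\{e\})\neq 1$.
   Context: A set $S\subseteq 2^E$ ($E$ finite) is powerful if for every $X\subseteq E$ the number of members of $S$ contained in $X$ is a power of 2. Its rank function is $r_S(X)=\log_2\big(|S|/|\{Y\in S:Y\subseteq E\setminus X\}|\big)$. The order of $S$ is $|E|$ and the rank of $S$ is $r_S(E)$. *)

theory Defs
  imports Complex_Main
begin

definition powerful :: "'a set \<Rightarrow> 'a set set \<Rightarrow> bool" where
  "powerful E S \<longleftrightarrow> finite E \<and> S \<subseteq> Pow E \<and>
     (\<forall>X. X \<subseteq> E \<longrightarrow> (\<exists>k::nat. card {Y \<in> S. Y \<subseteq> X} = 2 ^ k))"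

definition rankS :: "'a set \<Rightarrow> 'a set set \<Rightarrow> 'a set \<Rightarrow> real" where
  "rankS E S X = log 2 (real (card S) / real (card {Y \<in> S. Y \<subseteq> E - X}))"

end

theory Submission
  imports Defs
begin

(* Since the empty set lies in a powerful S, r_S(E) = log2 |S|, so |S| = 2^(n-1); and
   r_S({e}) = 1 says exactly that half of S avoids e. The number a_e of members avoiding e
   is a power of 2, so if r_S({e}) <> 1 then a_e = |S| or a_e <= |S|/4. Split S into four
   classes by membership of two distinct elements e, f: members of a class agree on {e,f},
   so each class has at most 2^(n-2) = |S|/2 members. If a_e = |S|, the two classes
   avoiding e fill S, so each has exactly |S|/2 members and a_f = |S|/2. If a_e and a_f are
   both at most |S|/4, the four classes add up to less than |S|, because the class of
   members avoiding both contains the empty set and is counted twice. *)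

lemma pow2_le_cases:
  assumes "(2::nat) ^ i \<le> 2 ^ j"
  shows "(2::nat) ^ i = 2 ^ j \<or> 2 * 2 ^ i = (2::nat) ^ j \<or> 4 * 2 ^ i \<le> (2::nat) ^ j"
proof -
  have "i \<le> j" using assms by simp
  then consider "j = i" | "j = Suc i" | "i + 2 \<le> j" by linarith
  then show ?thesis
  proof cases
    case 3
    then have "(2::nat) ^ (i + 2) \<le> 2 ^ j" by (intro power_increasing) simp_all
    then show ?thesis by (simp add: power_add)
  qed simp_all
qed

lemma card_filter_split:
  assumes "finite S"
  shows "card {x \<in> S. P x} = card {x \<in> S. P x \<and> Q x} + card {x \<in> S. P x \<and> \<not> Q x}"
proof -
  have "{x \<in> S. P x} = {x \<in> S. P x \<and> Q x} \<union> {x \<in> S. P x \<and> \<not> Q x}" by blast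
  then show ?thesis using assms by (simp add: card_Un_disjoint disjoint_iff)
qed

lemma card_le_if_agree_on:
  assumes "finite E" "T \<subseteq> Pow E" "\<And>X Y. X \<in> T \<Longrightarrow> Y \<in> T \<Longrightarrow> X \<inter> D = Y \<inter> D"
  shows "card T \<le> 2 ^ card (E - D)"
proof -
  have "inj_on (\<lambda>Y. Y - D) T"
  proof (rule inj_onI)
    fix X Y assume "X \<in> T" "Y \<in> T" "X - D = Y - D"
    with assms(3)[OF \<open>X \<in> T\<close> \<open>Y \<in> T\<close>] show "X = Y" by blast
  qed
  moreover have "(\<lambda>Y. Y - D) ` T \<subseteq> Pow (E - D)" using assms(2) by auto
  ultimately have "card T \<le> card (Pow (E - D))"
    by (intro card_inj_on_le) (simp_all add: assms(1))
  then show ?thesis using assms(1) by (simp add: card_Pow)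
qed

lemma powerful_finite: "powerful E S \<Longrightarrow> finite S"
  unfolding powerful_def by (meson finite_Pow_iff rev_finite_subset)

lemma powerful_empty_mem:
  assumes "powerful E S"
  shows "{} \<in> S"
proof -
  obtain k where k: "card {Y \<in> S. Y \<subseteq> {}} = 2 ^ k"
    using assms unfolding powerful_def by blast
  have "{Y \<in> S. Y \<subseteq> {}} \<noteq> {}"
    using k by (metis card.empty power_not_zero zero_neq_numeral)
  then show ?thesis by auto
qed

lemma powerful_card_avoiding_pow2:
  assumes "powerful E S"
  shows "\<exists>k. card {Y \<in> S. e \<notin> Y} = 2 ^ k"
proof -
  have "{Y \<in> S. e \<notin> Y} = {Y \<in> S. Y \<subseteq> E - {e}}"
    using assms unfolding powerful_def by blast
  then show ?thesis using assms unfolding powerful_def by simp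
qed

lemma powerful_card_pow2_rankS:
  assumes "powerful E S"
  obtains k where "card S = 2 ^ k" "rankS E S E = real k"
proof -
  have S: "S \<subseteq> Pow E" using assms unfolding powerful_def by blast
  obtain k where k: "card {Y \<in> S. Y \<subseteq> E} = 2 ^ k"
    using assms unfolding powerful_def by blast
  have "{Y \<in> S. Y \<subseteq> E} = S" using S by blast
  with k have "card S = 2 ^ k" by simp
  moreover have "{Y \<in> S. Y \<subseteq> E - E} = {{}}" using powerful_empty_mem[OF assms] by auto
  ultimately show ?thesis using that by (simp add: rankS_def)
qed

lemma powerful_rankS_singleton_eq_1_iff:
  assumes "powerful E S"
  shows "rankS E S {e} = 1 \<longleftrightarrow> card S = 2 * card {Y \<in> S. e \<notin> Y}"
proof -
  let ?A = "{Y \<in> S. e \<notin> Y}"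
  have "{Y \<in> S. Y \<subseteq> E - {e}} = ?A" using assms unfolding powerful_def by blast
  then have rank: "rankS E S {e} = log 2 (card S / card ?A)" by (simp add: rankS_def)
  have "{} \<in> ?A" using powerful_empty_mem[OF assms] by simp
  then have "card ?A > 0" using powerful_finite[OF assms] by (auto simp: card_gt_0_iff)
  moreover have "card S > 0"
    using powerful_empty_mem[OF assms] powerful_finite[OF assms] by (auto simp: card_gt_0_iff)
  ultimately have "card S / card ?A > 0" by simp
  moreover have "log 2 q = 1 \<longleftrightarrow> q = 2" if "q > 0" for q :: real
  proof
    assume "log 2 q = 1"
    then show "q = 2" using powr_log_cancel[of 2 q] that by simp
  qed simp
  ultimately have "log 2 (card S / card ?A) = 1 \<longleftrightarrow> card S / card ?A = 2" by blast
  with \<open>card ?A > 0\<close> show ?thesis by (simp add: rank field_simps, linarith)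
qed

lemma powerful_rankS_singleton_eq_1_if_other_ne_1:
  assumes S: "powerful E S" and card_S: "card S = 2 ^ (card E - 1)"
    and ef: "e \<in> E" "f \<in> E" "e \<noteq> f" and bad_e: "rankS E S {e} \<noteq> 1"
  shows "rankS E S {f} = 1"
proof (rule ccontr)
  assume bad_f: "rankS E S {f} \<noteq> 1"
  have fin: "finite E" "finite S" and sub: "S \<subseteq> Pow E"
    using S powerful_finite unfolding powerful_def by auto
  define h :: nat where "h = 2 ^ (card E - 2)"
  define c where "c a b = card {Y \<in> S. (e \<in> Y) = a \<and> (f \<in> Y) = b}" for a b
  have "card {e, f} \<le> card E" using ef fin by (intro card_mono) auto
  then have "card E - 1 = Suc (card E - 2)" using ef by simp
  then have N: "card S = 2 * h" using card_S by (simp add: h_def)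
  have c_le: "c a b \<le> h" for a b
  proof -
    have "c a b \<le> 2 ^ card (E - {e, f})"
      unfolding c_def using fin sub by (intro card_le_if_agree_on) auto
    then show ?thesis using ef fin by (simp add: h_def card_Diff_subset numeral_2_eq_2)
  qed
  have gap: "card {Y \<in> S. x \<notin> Y} = card S \<or> 4 * card {Y \<in> S. x \<notin> Y} \<le> card S"
    if "rankS E S {x} \<noteq> 1" for x
  proof -
    obtain j where j: "card {Y \<in> S. x \<notin> Y} = 2 ^ j"
      using powerful_card_avoiding_pow2[OF S] by blast
    have "card {Y \<in> S. x \<notin> Y} \<le> card S" using fin by (intro card_mono) auto
    then show ?thesis
      using pow2_le_cases[of j "card E - 1"] j card_S that
        powerful_rankS_singleton_eq_1_iff[OF S, of x] by auto
  qed
  have "{} \<in> {Y \<in> S. (e \<in> Y) = False \<and> (f \<in> Y) = False}"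
    using powerful_empty_mem[OF S] by simp
  then have c00: "c False False \<ge> 1" unfolding c_def using fin by (auto simp: Suc_le_eq card_gt_0_iff)
  have avoid_e: "card {Y \<in> S. e \<notin> Y} = c False True + c False False"
    using card_filter_split[OF fin(2), of "\<lambda>Y. e \<notin> Y" "\<lambda>Y. f \<in> Y"] by (simp add: c_def)
  have avoid_f: "card {Y \<in> S. f \<notin> Y} = c True False + c False False"
    using card_filter_split[OF fin(2), of "\<lambda>Y. f \<notin> Y" "\<lambda>Y. e \<in> Y"] by (simp add: c_def conj_commute)
  have "card S = card {Y \<in> S. e \<in> Y} + card {Y \<in> S. e \<notin> Y}"
    using card_filter_split[OF fin(2), of "\<lambda>_. True" "\<lambda>Y. e \<in> Y"] by simp
  also have "card {Y \<in> S. e \<in> Y} = c True True + c True False"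
    using card_filter_split[OF fin(2), of "\<lambda>Y. e \<in> Y" "\<lambda>Y. f \<in> Y"] by (simp add: c_def)
  finally have total: "card S = c True True + c True False + c False True + c False False"
    using avoid_e by simp
  show False
    using gap[OF bad_e] gap[OF bad_f] N c00 avoid_e avoid_f total
      c_le[of True True] c_le[of True False] c_le[of False True] c_le[of False False]
    by linarith
qed

theorem lemma1:
  fixes E :: "'a set" and S :: "'a set set"
  assumes "powerful E S"
    and "rankS E S E = real (card E) - 1"
  shows "card {e \<in> E. rankS E S {e} \<noteq> 1} \<le> 1"
proof -
  obtain k where "card S = 2 ^ k" "rankS E S E = real k"
    using powerful_card_pow2_rankS[OF assms(1)] .
  with assms(2) have card_S: "card S = 2 ^ (card E - 1)" by simp
  have "finite {e \<in> E. rankS E S {e} \<noteq> 1}"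
    using assms(1) unfolding powerful_def by simp
  moreover have "e = f" if "e \<in> E" "rankS E S {e} \<noteq> 1" "f \<in> E" "rankS E S {f} \<noteq> 1" for e f
    using powerful_rankS_singleton_eq_1_if_other_ne_1[OF assms(1) card_S] that by blast
  ultimately show ?thesis by (auto simp: card_le_Suc0_iff_eq)
qed

end
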